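(* Let $I_1=\{m+ni: m\in\{1,2,\ldots\},n\in\mathbb Z\}$ and $I_2=\{m+ni: m\in\{1,2,\ldots\},\ n\in\{0,1,2,\ldots\}\}$, let $D=\{z\in\mathbb C:|z-1/2|\le 1/2\}$, $\theta_b(z)=1/(z+b)$, and let $s>1$ and $R>\sqrt2$. Let $v_s$ be the strictly positive eigenvector of the operator $(L_sv)(z)=\sum_{b\in\mathcal B}|z+b|^{-2s}v(\theta_b(z))$ on $C_{\mathbb R}(D)$ with $\mathcal B=I_1$. Then for all $z\in D$, $$\sum_{b\in I_1,|b|>R}\frac{v_s(\theta_b(z))}{|z+b|^{2s}}\le \exp\Big(\frac{2s}{\sqrt{R^2-R}}\Big)\Big(\frac{R}{R-1}\Big)^s\left[\frac{1}{2s-1}\Big(\frac{1}{R-1}\Big)^{2s-1}+\frac{\pi}{2}\cdot\frac{1}{s-1}\Big(\frac{1}{R-\sqrt2}\Big)^{2s-2}\right]v_s(0).$$ Similarly, if $v_s$ is the strictly positive eigenvector of the corresponding operator with $\mathcal B=I_2$, then for all $z\in D$, $$\sum_{b\in I_2,|b|>R}\frac{v_s(\theta_b(z))}{|z+b|^{2s}}\le \exp\Big(\frac{2s}{\sqrt{R^2-R}}\Big)\Big(\frac{R}{R-1}\Big)^s\left[\frac{1}{2s-1}\Big(\frac{1}{R-1}\Big)^{2s-1}+\frac{\pi}{4}\cdot\frac{1}{s-1}\Big(\frac{1}{R-\sqrt2}\Big)^{2s-2}\right]v_s(0).$$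
   Context: $C_{\mathbb R}(D)$ is the space of real continuous functions on $D$. For $s>1$ and $\mathcal B=I_1$ or $I_2$ the operator $L_s$ is a bounded linear operator on $C_{\mathbb R}(D)$ having a strictly positive eigenvector $v_s$ (unique up to positive multiples) with eigenvalue equal to its spectral radius. *)

theory Defs
  imports "HOL-Analysis.Analysis"
begin

definition I1 :: "complex set" where
  "I1 = {of_nat m + of_int n * \<i> | m n. m \<ge> 1}"

definition I2 :: "complex set" where
  "I2 = {of_nat m + of_nat n * \<i> | m n. m \<ge> 1}"

definition Ddisk :: "complex set" where
  "Ddisk = cball (1/2) (1/2)"

definition Lop :: "real \<Rightarrow> complex set \<Rightarrow> (complex \<Rightarrow> real) \<Rightarrow> complex \<Rightarrow> real" where
  "Lop s B v z = (\<Sum>\<^sub>\<infinity> b\<in>B. v (1 / (z + b)) / cmod (z + b) powr (2 * s))"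

definition Lop_pow_norm :: "real \<Rightarrow> complex set \<Rightarrow> nat \<Rightarrow> real" where
  "Lop_pow_norm s B n =
     Sup {Sup ((\<lambda>z. \<bar>(Lop s B ^^ n) v z\<bar>) ` Ddisk) | v.
            continuous_on Ddisk v \<and> (\<forall>z\<in>Ddisk. \<bar>v z\<bar> \<le> 1)}"

text \<open>Spectral radius of L_s on C_R(D), via the Gelfand formula lim ||L^n||^(1/n).\<close>
definition spec_rad :: "real \<Rightarrow> complex set \<Rightarrow> real" where
  "spec_rad s B = lim (\<lambda>n. root n (Lop_pow_norm s B n))"

definition pos_eigvec :: "real \<Rightarrow> complex set \<Rightarrow> (complex \<Rightarrow> real) \<Rightarrow> bool" where
  "pos_eigvec s B v \<longleftrightarrow> continuous_on Ddisk v \<and> (\<forall>z\<in>Ddisk. v z > 0) \<and>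
     (\<forall>z\<in>Ddisk. Lop s B v z = spec_rad s B * v z)"

end

theory Submission
  imports Defs
begin

text \<open>
  Let \<open>kernel_ratio s p q\<close> be the supremum over \<open>u \<in> D\<close> of \<open>(|1 + u q| / |1 + u p|)^(2s)\<close>.
  The kernels \<open>|1 + u z|^(-2s)\<close> are permuted by the branches \<open>f \<mapsto> |z + b|^(-2s) f (1 / (z + b))\<close>
  of \<open>L\<^sub>s\<close>, so the eigenvalue equation carries a bound \<open>v p \<le> K kernel_ratio s p q v q\<close> from the
  images of \<open>p, q\<close> under all pairs of branches back to \<open>p, q\<close>. Two branches contract distances by
  a factor 4 and \<open>v\<close> is uniformly continuous and bounded below, so \<open>v p \<le> kernel_ratio s p q v q\<close>
  on all of \<open>D\<close>; with \<open>q = 0\<close> this gives \<open>v (1 / (z + b)) \<le> exp (2s / |z + b|) v 0\<close>. For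
  \<open>|b| > R\<close> moreover \<open>|z + b|\<^sup>2 \<ge> |b|\<^sup>2 - |b|\<close>, which yields the factors
  \<open>exp (2s / sqrt (R\<^sup>2 - R))\<close> and \<open>(R / (R - 1))^s\<close> in front of \<open>\<Sum>\<^bsub>|b| > R\<^esub> |b|^(-2s)\<close>.
  That lattice sum is compared with an integral: on the real axis directly, off the axis by counting
  lattice points, since the unit squares below lattice points \<open>b\<close> with \<open>R < |b| \<le> r\<close> and their
  mirror images are disjoint and lie in the annulus \<open>R - sqrt 2 < |x| < r\<close>.
\<close>

section \<open>Sums controlled by a counting function\<close>

lemma power2_powr: "0 \<le> x \<Longrightarrow> (x^2) powr a = x powr (2 * a)"
  for x a :: real
  using powr_powr[of x 2 a] by simp

lemma inverse_powr: "0 < x \<Longrightarrow> (1 / x) powr a = x powr (- a)"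
  for x a :: real
  by (simp add: powr_divide powr_minus_divide)

lemma powr_neg_diff_ge:
  fixes a b p :: real
  assumes "0 < a" "a \<le> b" "0 < p"
  shows "p * (b - a) * b powr (- p - 1) \<le> a powr (- p) - b powr (- p)"
proof (cases "a = b")
  case False
  with assms have ab: "a < b" by simp
  have "\<And>x. a \<le> x \<Longrightarrow> x \<le> b \<Longrightarrow>
      ((\<lambda>x. x powr (- p)) has_real_derivative (- p) * x powr (- p - 1)) (at x)"
    using assms by (auto intro!: derivative_eq_intros)
  from MVT2[OF ab this] obtain z where z: "a < z" "z < b"
    "b powr (- p) - a powr (- p) = (b - a) * ((- p) * z powr (- p - 1))" by blast
  have "b powr (- p - 1) \<le> z powr (- p - 1)"
    using z assms by (intro powr_mono2') auto
  then have "p * (b - a) * b powr (- p - 1) \<le> p * (b - a) * z powr (- p - 1)"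
    using ab assms by (intro mult_left_mono) auto
  also have "\<dots> = a powr (- p) - b powr (- p)" using z(3) by (simp add: algebra_simps)
  finally show ?thesis .
qed simp

text \<open>Comparison with \<open>\<integral>\<^sub>0\<^sup>\<infinity> (a + h x) powr (-q) dx\<close>, the mean value theorem standing in
  for the integral.\<close>
lemma sum_powr_arith_prog_le:
  fixes a h q :: real
  assumes "0 < a" "0 < h" "1 < q"
  shows "(\<Sum>k=1..N. (a + h * real k) powr (- q)) \<le> a powr (1 - q) / (h * (q - 1))"
proof -
  have telescope: "(\<Sum>k=1..n. (a + h * real k) powr (- q))
      \<le> (a powr (1 - q) - (a + h * real n) powr (1 - q)) / (h * (q - 1))" for n
  proof (induction n)
    case (Suc n)
    let ?x = "a + h * real n" and ?y = "a + h * real (Suc n)"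
    have "(q - 1) * (?y - ?x) * ?y powr (- (q - 1) - 1) \<le> ?x powr (- (q - 1)) - ?y powr (- (q - 1))"
      using assms by (intro powr_neg_diff_ge) (auto intro: add_pos_nonneg)
    moreover have "?y - ?x = h" by (simp add: algebra_simps)
    ultimately have "?y powr (- q) \<le> (?x powr (1 - q) - ?y powr (1 - q)) / (h * (q - 1))"
      using assms by (simp add: field_simps)
    with Suc show ?case by (simp add: diff_divide_distrib)
  qed simp
  moreover have "0 \<le> (a + h * real N) powr (1 - q) / (h * (q - 1))" using assms by simp
  ultimately show ?thesis using telescope[of N] unfolding diff_divide_distrib by linarith
qed

lemma sum_powr_le_by_rank:
  fixes w :: "'a \<Rightarrow> real" and a h q :: real
  assumes "finite F" "0 < a" "0 < h" "0 < q"
    and "\<And>b. b \<in> F \<Longrightarrow> a + h * real (card {c\<in>F. w c \<le> w b}) \<le> w b"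
  shows "(\<Sum>b\<in>F. w b powr (- q)) \<le> (\<Sum>k=1..card F. (a + h * real k) powr (- q))"
  using assms
proof (induction "card F" arbitrary: F)
  case (Suc n)
  then have "Max (w ` F) \<in> w ` F" by (intro Max_in) auto
  then obtain b0 where b0: "b0 \<in> F" "w b0 = Max (w ` F)" by auto
  then have "{c\<in>F. w c \<le> w b0} = F" using Suc.prems(1) by auto
  then have top: "a + h * real (card F) \<le> w b0" using Suc.prems(5)[OF b0(1)] by simp
  let ?F = "F - {b0}"
  have rank: "a + h * real (card {c\<in>?F. w c \<le> w b}) \<le> w b" if "b \<in> ?F" for b
  proof -
    have "card {c\<in>?F. w c \<le> w b} \<le> card {c\<in>F. w c \<le> w b}"
      using Suc.prems(1) by (intro card_mono) auto
    then have "h * real (card {c\<in>?F. w c \<le> w b}) \<le> h * real (card {c\<in>F. w c \<le> w b})"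
      using assms(3) by simp
    then show ?thesis using Suc.prems(5)[of b] that by simp
  qed
  have card_F: "n = card ?F" using Suc.hyps(2) b0 Suc.prems by simp
  have IH: "(\<Sum>b\<in>?F. w b powr (- q)) \<le> (\<Sum>k=1..n. (a + h * real k) powr (- q))"
    using Suc.hyps(1)[OF card_F] Suc.prems rank card_F by auto
  have "w b0 powr (- q) \<le> (a + h * real (Suc n)) powr (- q)"
    using top Suc.hyps(2) Suc.prems by (intro powr_mono2') (auto intro: add_pos_nonneg)
  moreover have "(\<Sum>b\<in>F. w b powr (- q)) = w b0 powr (- q) + (\<Sum>b\<in>?F. w b powr (- q))"
    using Suc.prems(1) b0(1) by (simp add: sum.remove)
  ultimately show ?case using IH unfolding Suc.hyps(2)[symmetric] by simp
qed simp

lemma powr_sum_le_by_counting: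
  fixes w :: "'a \<Rightarrow> real" and a h q :: real
  assumes "0 < a" "0 < h" "1 < q"
    and finite_rank: "\<And>b. b \<in> A \<Longrightarrow> finite {c\<in>A. w c \<le> w b}"
    and rank: "\<And>b. b \<in> A \<Longrightarrow> a + h * real (card {c\<in>A. w c \<le> w b}) \<le> w b"
  shows "(\<lambda>b. w b powr (- q)) summable_on A"
    "(\<Sum>\<^sub>\<infinity>b\<in>A. w b powr (- q)) \<le> a powr (1 - q) / (h * (q - 1))"
proof -
  have finite_sums: "(\<Sum>b\<in>F. w b powr (- q)) \<le> a powr (1 - q) / (h * (q - 1))"
    if F: "finite F" "F \<subseteq> A" for F
  proof -
    have "(\<Sum>b\<in>F. w b powr (- q)) \<le> (\<Sum>k=1..card F. (a + h * real k) powr (- q))"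
    proof (rule sum_powr_le_by_rank[OF F(1) assms(1,2)])
      fix b assume b: "b \<in> F"
      have "card {c\<in>F. w c \<le> w b} \<le> card {c\<in>A. w c \<le> w b}"
        using F b finite_rank by (intro card_mono) auto
      then have "h * real (card {c\<in>F. w c \<le> w b}) \<le> h * real (card {c\<in>A. w c \<le> w b})"
        using assms(2) by simp
      then show "a + h * real (card {c\<in>F. w c \<le> w b}) \<le> w b"
        using rank[of b] F b by auto
    qed (use assms in simp)
    also have "\<dots> \<le> a powr (1 - q) / (h * (q - 1))"
      by (rule sum_powr_arith_prog_le[OF assms(1-3)])
    finally show ?thesis .
  qed
  show summable: "(\<lambda>b. w b powr (- q)) summable_on A"
    using finite_sums by (intro nonneg_bdd_above_summable_on) (auto simp: bdd_above_def)
  show "(\<Sum>\<^sub>\<infinity>b\<in>A. w b powr (- q)) \<le> a powr (1 - q) / (h * (q - 1))"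
    using finite_sums by (intro infsum_le_finite_sums[OF summable])
qed

section \<open>Lattice points in an annulus\<close>

definition unit_square :: "complex \<Rightarrow> complex set" where
  "unit_square t = box (t - (1 + \<i>)) t"

lemma mem_unit_square:
  "x \<in> unit_square t \<longleftrightarrow> Re t - 1 < Re x \<and> Re x < Re t \<and> Im t - 1 < Im x \<and> Im x < Im t"
  unfolding unit_square_def by (auto simp: mem_box Basis_complex_def)

lemma measure_unit_square: "measure lborel (unit_square t) = 1"
  unfolding unit_square_def by (subst measure_lborel_box) (auto simp: Basis_complex_def)

lemma disjoint_unit_squares:
  assumes "Re t \<in> \<int>" "Im t \<in> \<int>" "Re t' \<in> \<int>" "Im t' \<in> \<int>" "t \<noteq> t'"
  shows "disjnt (unit_square t) (unit_square t')"
proof -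
  have "t = t'" if "x \<in> unit_square t" "x \<in> unit_square t'" for x
  proof -
    have "Re t = Re t'"
      using that assms Ints_eq_abs_less1[of "Re t" "Re t'"] unfolding mem_unit_square by auto
    moreover have "Im t = Im t'"
      using that assms Ints_eq_abs_less1[of "Im t" "Im t'"] unfolding mem_unit_square by auto
    ultimately show ?thesis by (simp add: complex_eq_iff)
  qed
  then show ?thesis using assms(5) unfolding disjnt_def by blast
qed

lemma measure_Union_unit_squares:
  assumes "finite T" "\<And>t. t \<in> T \<Longrightarrow> Re t \<in> \<int> \<and> Im t \<in> \<int>"
  shows "measure lborel (\<Union>t\<in>T. unit_square t) = card T"
proof -
  have "measure lborel (\<Union>t\<in>T. unit_square t) = (\<Sum>t\<in>T. measure lborel (unit_square t))"
    using assms by (intro measure_UNION')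
      (auto simp: unit_square_def pairwise_def intro: disjoint_unit_squares[unfolded unit_square_def])
  then show ?thesis by (simp add: measure_unit_square)
qed

text \<open>\<open>unit_square (reflect_corner \<sigma> c)\<close> is the mirror image of \<open>unit_square c\<close> in the
  coordinate axes selected by \<open>\<sigma>\<close>.\<close>
definition reflect_corner :: "bool \<times> bool \<Rightarrow> complex \<Rightarrow> complex" where
  "reflect_corner \<sigma> c = Complex (if fst \<sigma> then Re c else 1 - Re c) (if snd \<sigma> then Im c else 1 - Im c)"

lemma abs_mem_reflected_square:
  assumes "1 \<le> Re c" "1 \<le> Im c" "x \<in> unit_square (reflect_corner \<sigma> c)"
  shows "Re c - 1 < \<bar>Re x\<bar> \<and> \<bar>Re x\<bar> < Re c \<and> Im c - 1 < \<bar>Im x\<bar> \<and> \<bar>Im x\<bar> < Im c"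
  using assms unfolding mem_unit_square reflect_corner_def by (auto split: if_splits)

lemma inj_on_reflect_corner:
  assumes "\<And>c. c \<in> C \<Longrightarrow> 1 \<le> Re c \<and> 1 \<le> Im c"
  shows "inj_on (\<lambda>(\<sigma>, c). reflect_corner \<sigma> c) (UNIV \<times> C)"
proof (rule inj_onI)
  fix x y assume "x \<in> UNIV \<times> C" "y \<in> UNIV \<times> C"
    and eq: "(\<lambda>(\<sigma>, c). reflect_corner \<sigma> c) x = (\<lambda>(\<sigma>, c). reflect_corner \<sigma> c) y"
  then have "1 \<le> Re (snd x)" "1 \<le> Im (snd x)" "1 \<le> Re (snd y)" "1 \<le> Im (snd y)"
    using assms by auto
  with eq show "x = y"
    by (cases x; cases y) (auto simp: reflect_corner_def complex_eq_iff split: if_splits)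
qed

lemma norm_bounds_in_square:
  fixes c x :: complex
  assumes "1 \<le> Re c" "1 \<le> Im c"
    and "Re c - 1 < \<bar>Re x\<bar>" "\<bar>Re x\<bar> < Re c" "Im c - 1 < \<bar>Im x\<bar>" "\<bar>Im x\<bar> < Im c"
  shows "cmod x < cmod c" "cmod c - sqrt 2 < cmod x"
proof -
  have "\<bar>Re x\<bar>^2 < (Re c)^2" "\<bar>Im x\<bar>^2 < (Im c)^2"
    using assms by (intro power_strict_mono; simp)+
  then show "cmod x < cmod c" unfolding cmod_def by (intro real_sqrt_less_mono) simp
next
  define y where "y = Complex \<bar>Re x\<bar> \<bar>Im x\<bar>"
  have "(Re c - \<bar>Re x\<bar>)^2 < 1" "(Im c - \<bar>Im x\<bar>)^2 < 1"
    using assms by (simp_all add: abs_square_less_1)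
  then have "cmod (c - y) < sqrt 2" unfolding y_def cmod_def by (intro real_sqrt_less_mono) simp
  moreover have "cmod y = cmod x" unfolding y_def cmod_def by simp
  moreover have "cmod c \<le> cmod y + cmod (c - y)" using norm_triangle_ineq[of y "c - y"] by simp
  ultimately show "cmod c - sqrt 2 < cmod x" by linarith
qed

lemma reflected_square_subset_annulus:
  assumes "1 \<le> Re c" "1 \<le> Im c" "R < cmod c" "cmod c \<le> r"
  shows "unit_square (reflect_corner \<sigma> c) \<subseteq> ball 0 r - cball 0 (R - sqrt 2)"
proof
  fix x assume "x \<in> unit_square (reflect_corner \<sigma> c)"
  then have "Re c - 1 < \<bar>Re x\<bar> \<and> \<bar>Re x\<bar> < Re c \<and> Im c - 1 < \<bar>Im x\<bar> \<and> \<bar>Im x\<bar> < Im c"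
    by (rule abs_mem_reflected_square[OF assms(1,2)])
  then have "cmod x < cmod c" "cmod c - sqrt 2 < cmod x"
    using norm_bounds_in_square[OF assms(1,2)] by auto
  with assms(3,4) show "x \<in> ball 0 r - cball 0 (R - sqrt 2)" by simp
qed

lemma measure_annulus:
  assumes "0 \<le> \<rho>" "\<rho> < r"
  shows "ball (0::complex) r - cball 0 \<rho> \<in> fmeasurable lborel"
    "measure lborel (ball (0::complex) r - cball 0 \<rho>) = pi * (r^2 - \<rho>^2)"
proof -
  have ball: "ball (0::complex) r \<in> fmeasurable lborel"
    using emeasure_lborel_ball_finite[of "0::complex" r] by (intro fmeasurableI) auto
  then show "ball (0::complex) r - cball 0 \<rho> \<in> fmeasurable lborel"
    using fmeasurable_compact[of "cball (0::complex) \<rho>"] by (intro fmeasurable.Diff) auto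
  have "measure lborel (ball (0::complex) r - cball 0 \<rho>)
      = measure lborel (ball (0::complex) r) - measure lborel (cball (0::complex) \<rho>)"
    using assms by (intro measurable_measure_Diff ball) auto
  also have "\<dots> = pi * r^2 - pi * \<rho>^2"
    using assms by (simp add: content_ball content_cball unit_ball_vol_2)
  finally show "measure lborel (ball (0::complex) r - cball 0 \<rho>) = pi * (r^2 - \<rho>^2)"
    by (simp add: algebra_simps)
qed

lemma card_quadrant_lattice_annulus:
  fixes C :: "complex set"
  assumes "finite C" "sqrt 2 < R" "R \<le> r"
    and C: "\<And>c. c \<in> C \<Longrightarrow> Re c \<in> \<int> \<and> Im c \<in> \<int> \<and> 1 \<le> Re c \<and> 1 \<le> Im c \<and> R < cmod c \<and> cmod c \<le> r"
  shows "4 * real (card C) \<le> pi * (r^2 - (R - sqrt 2)^2)"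
proof -
  have "0 < sqrt (2::real)" by simp
  then have annulus: "0 \<le> R - sqrt 2" "R - sqrt 2 < r" using assms(2,3) by linarith+
  define T where "T = (\<lambda>(\<sigma>, c). reflect_corner \<sigma> c) ` (UNIV \<times> C)"
  have card_T: "card T = 4 * card C"
    unfolding T_def using assms(1) C inj_on_reflect_corner[of C]
    by (simp add: card_image card_cartesian_product)
  have "real (card T) = measure lborel (\<Union>t\<in>T. unit_square t)"
    using assms(1) C by (intro measure_Union_unit_squares[symmetric]) (auto simp: T_def reflect_corner_def)
  also have "\<dots> \<le> measure lborel (ball 0 r - cball (0::complex) (R - sqrt 2))"
  proof (rule measure_mono_fmeasurable)
    have "unit_square (reflect_corner \<sigma> c) \<subseteq> ball 0 r - cball 0 (R - sqrt 2)" if "c \<in> C" for \<sigma> c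
      using C[OF that] by (intro reflected_square_subset_annulus) auto
    then show "(\<Union>t\<in>T. unit_square t) \<subseteq> ball 0 r - cball 0 (R - sqrt 2)"
      unfolding T_def by auto
    show "(\<Union>t\<in>T. unit_square t) \<in> sets lborel"
      using assms(1) by (intro sets.finite_UN) (auto simp: T_def unit_square_def)
    show "ball 0 r - cball (0::complex) (R - sqrt 2) \<in> fmeasurable lborel"
      using annulus by (rule measure_annulus)
  qed
  also have "\<dots> = pi * (r^2 - (R - sqrt 2)^2)"
    using annulus by (rule measure_annulus)
  finally show ?thesis using card_T by simp
qed

section \<open>The disk D\<close>

lemma mem_Ddisk_iff: "z \<in> Ddisk \<longleftrightarrow> cmod (z - 1/2) \<le> 1/2"
  unfolding Ddisk_def by (simp add: dist_norm norm_minus_commute)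

lemma zero_in_Ddisk: "0 \<in> Ddisk"
  by (simp add: mem_Ddisk_iff)

lemma compact_Ddisk: "compact Ddisk"
  unfolding Ddisk_def by simp

lemma Ddisk_norm_sq_le_Re:
  assumes "z \<in> Ddisk"
  shows "(cmod z)^2 \<le> Re z"
proof -
  have "(cmod (z - 1/2))^2 \<le> (1/2)^2" using assms unfolding mem_Ddisk_iff by (intro power_mono) auto
  then show ?thesis unfolding cmod_power2 by (simp add: power2_eq_square algebra_simps)
qed

lemma Ddisk_Re_nonneg: "z \<in> Ddisk \<Longrightarrow> 0 \<le> Re z"
  using Ddisk_norm_sq_le_Re[of z] zero_le_power2[of "cmod z"] by linarith

lemma Ddisk_norm_le_1:
  assumes "z \<in> Ddisk"
  shows "cmod z \<le> 1"
proof -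
  have "cmod z * cmod z \<le> cmod z * 1"
    using Ddisk_norm_sq_le_Re[OF assms] complex_Re_le_cmod[of z] by (simp add: power2_eq_square)
  then show ?thesis by (cases "cmod z = 0") auto
qed

lemma Ddisk_dist_le_1: "p \<in> Ddisk \<Longrightarrow> q \<in> Ddisk \<Longrightarrow> cmod (p - q) \<le> 1"
  unfolding mem_Ddisk_iff using norm_triangle_ineq4[of "p - 1/2" "q - 1/2"] by simp

lemma inverse_in_Ddisk:
  assumes "1 \<le> Re w"
  shows "1 / w \<in> Ddisk"
proof -
  have w0: "w \<noteq> 0" using assms by auto
  have "1 / w - 1/2 = (2 - w) / (2 * w)" using w0 by (simp add: field_simps)
  then have eq: "cmod (1 / w - 1/2) = cmod (2 - w) / (2 * cmod w)" by (simp add: norm_divide norm_mult)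
  have "(cmod (2 - w))^2 \<le> (cmod w)^2" unfolding cmod_power2 using assms
    by (simp add: power2_eq_square algebra_simps)
  then have "cmod (2 - w) \<le> cmod w" by (simp add: power_mono_iff)
  then show ?thesis unfolding mem_Ddisk_iff eq using w0 by (simp add: field_simps)
qed

lemma Re_add_ge_1: "z \<in> Ddisk \<Longrightarrow> 1 \<le> Re b \<Longrightarrow> 1 \<le> Re (z + b)"
  using Ddisk_Re_nonneg[of z] by simp

lemma norm_add_ge_1: "z \<in> Ddisk \<Longrightarrow> 1 \<le> Re b \<Longrightarrow> 1 \<le> cmod (z + b)"
  using Re_add_ge_1 complex_Re_le_cmod order_trans by blast

lemma inverse_add_in_Ddisk: "z \<in> Ddisk \<Longrightarrow> 1 \<le> Re b \<Longrightarrow> 1 / (z + b) \<in> Ddisk"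
  by (intro inverse_in_Ddisk Re_add_ge_1)

lemma Re_mult_Ddisk_ge:
  assumes "u \<in> Ddisk"
  shows "(Re w - cmod w) / 2 \<le> Re (u * w)"
proof -
  define e where "e = u - 1/2"
  have e: "cmod e \<le> 1/2" using assms unfolding mem_Ddisk_iff e_def .
  have "Re (u * w) = Re w / 2 + Re (e * w)" unfolding e_def by (simp add: algebra_simps)
  moreover have "- (cmod e * cmod w) \<le> Re (e * w)"
    using abs_Re_le_cmod[of "e * w"] by (simp add: norm_mult)
  moreover have "cmod e * cmod w \<le> 1/2 * cmod w" using e by (intro mult_right_mono) auto
  ultimately show ?thesis by (simp add: diff_divide_distrib)
qed

lemma norm_one_add_mult_Ddisk_ge:
  assumes "u \<in> Ddisk" "w \<in> Ddisk"
  shows "1 - cmod w / 2 \<le> cmod (1 + u * w)"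
proof -
  have "1 - cmod w / 2 \<le> Re (1 + u * w)"
    using Re_mult_Ddisk_ge[OF assms(1), of w] Ddisk_Re_nonneg[OF assms(2)] by simp
  also have "\<dots> \<le> cmod (1 + u * w)" by (rule complex_Re_le_cmod)
  finally show ?thesis .
qed

lemma norm_add_sq_ge:
  assumes "z \<in> Ddisk" "0 \<le> Re b"
  shows "(cmod b)^2 - cmod b \<le> (cmod (z + b))^2"
proof -
  have "(cmod (z + b))^2 = (cmod z)^2 + (cmod b)^2 + 2 * Re (z * cnj b)"
    unfolding cmod_power2 by (simp add: power2_eq_square algebra_simps)
  moreover have "- cmod b \<le> 2 * Re (z * cnj b)"
    using Re_mult_Ddisk_ge[OF assms(1), of "cnj b"] assms(2) by (simp add: field_simps)
  ultimately show ?thesis using zero_le_power2[of "cmod z"] by linarith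
qed

lemma norm_add_ge_sqrt:
  assumes "z \<in> Ddisk" "0 \<le> Re b" "1 < R" "R < cmod b"
  shows "sqrt (R^2 - R) \<le> cmod (z + b)"
proof -
  have "(cmod b)^2 - cmod b - (R^2 - R) = (cmod b - R) * (cmod b + R - 1)"
    by (simp add: power2_eq_square algebra_simps)
  also have "\<dots> \<ge> 0" using assms(3,4) by simp
  finally have "R^2 - R \<le> (cmod b)^2 - cmod b" by simp
  also have "\<dots> \<le> (cmod (z + b))^2" by (rule norm_add_sq_ge[OF assms(1,2)])
  finally show ?thesis using real_sqrt_le_mono by fastforce
qed

lemma inverse_norm_add_powr_le:
  assumes "z \<in> Ddisk" "0 \<le> Re b" "1 < R" "R < cmod b" "0 < s"
  shows "1 / cmod (z + b) powr (2 * s) \<le> (R / (R - 1)) powr s * cmod b powr (- (2 * s))"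
proof -
  define X where "X = cmod b"
  have X: "1 < X" "R < X" using assms(3,4) unfolding X_def by auto
  have "X * 1 < X * X" using X by (intro mult_strict_left_mono) auto
  then have pos: "0 < X^2 - X" by (simp add: power2_eq_square)
  have le: "X^2 - X \<le> (cmod (z + b))^2" unfolding X_def by (rule norm_add_sq_ge[OF assms(1,2)])
  have "1 / cmod (z + b) powr (2 * s) = ((cmod (z + b))^2) powr (- s)"
    by (simp add: power2_powr powr_minus_divide)
  also have "\<dots> \<le> (X^2 - X) powr (- s)"
    using pos le assms(5) by (intro powr_mono2') auto
  also have "\<dots> = (X^2) powr (- s) * (X / (X - 1)) powr s"
  proof -
    have "X^2 - X = X^2 * ((X - 1) / X)" using X by (simp add: field_simps power2_eq_square)
    then show ?thesis using X by (simp add: powr_mult powr_minus_divide powr_divide)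
  qed
  also have "\<dots> \<le> X powr (- (2 * s)) * (R / (R - 1)) powr s"
  proof -
    have "X / (X - 1) \<le> R / (R - 1)" using X assms(3) by (simp add: field_simps)
    then show ?thesis
      using X assms(3,5) by (auto simp: power2_powr intro!: mult_left_mono powr_mono2)
  qed
  finally show ?thesis unfolding X_def by (simp add: mult.commute)
qed

lemma double_branch_contraction:
  assumes b: "1 \<le> Re b" and c: "1 \<le> Re c" and p: "p \<in> Ddisk" and q: "q \<in> Ddisk"
  shows "cmod (1 / (1 / (p + c) + b) - 1 / (1 / (q + c) + b)) \<le> cmod (p - q) / 4"
proof -
  have expand: "2 \<le> cmod (x + c) * cmod (1 / (x + c) + b)" if x: "x \<in> Ddisk" for x
  proof -
    define t where "t = cmod (x + c)"
    have t: "1 \<le> t" unfolding t_def using norm_add_ge_1[OF x c] .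
    have "Re (1 / (x + c)) = Re (x + c) / t^2" unfolding t_def by (simp add: Re_divide cmod_power2)
    then have "1 / t^2 \<le> Re (1 / (x + c))" using Re_add_ge_1[OF x c] t by (simp add: divide_right_mono)
    then have "1 + 1 / t^2 \<le> Re (1 / (x + c) + b)" using b by simp
    also have "\<dots> \<le> cmod (1 / (x + c) + b)" by (rule complex_Re_le_cmod)
    finally have "t * (1 + 1 / t^2) \<le> t * cmod (1 / (x + c) + b)" using t by (intro mult_left_mono) auto
    moreover have "t * (1 + 1 / t^2) - 2 = (t - 1)^2 / t" using t by (simp add: field_simps power2_eq_square)
    moreover have "0 \<le> (t - 1)^2 / t" using t by simp
    ultimately show ?thesis unfolding t_def by linarith
  qed
  have nonzero: "x + c \<noteq> 0" "1 / (x + c) + b \<noteq> 0" if "x \<in> Ddisk" for x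
    using expand[OF that] by auto
  have dist_inverse: "cmod (1 / (x + d) - 1 / (y + d)) = cmod (x - y) / (cmod (x + d) * cmod (y + d))"
    if "x + d \<noteq> 0" "y + d \<noteq> 0" for x y d :: complex
  proof -
    have "1 / (x + d) - 1 / (y + d) = (y - x) / ((x + d) * (y + d))" using that by (simp add: field_simps)
    then show ?thesis by (simp add: norm_divide norm_mult norm_minus_commute)
  qed
  have "cmod (1 / (1 / (p + c) + b) - 1 / (1 / (q + c) + b))
      = cmod (1 / (p + c) - 1 / (q + c)) / (cmod (1 / (p + c) + b) * cmod (1 / (q + c) + b))"
    using nonzero[OF p] nonzero[OF q] by (intro dist_inverse)
  also have "cmod (1 / (p + c) - 1 / (q + c)) = cmod (p - q) / (cmod (p + c) * cmod (q + c))"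
    using nonzero[OF p] nonzero[OF q] by (intro dist_inverse)
  finally have "cmod (1 / (1 / (p + c) + b) - 1 / (1 / (q + c) + b))
      = cmod (p - q) / ((cmod (p + c) * cmod (1 / (p + c) + b)) * (cmod (q + c) * cmod (1 / (q + c) + b)))"
    by (simp add: field_simps)
  also have "\<dots> \<le> cmod (p - q) / (2 * 2)"
    using expand[OF p] expand[OF q] by (intro divide_left_mono mult_mono) auto
  finally show ?thesis by simp
qed

section \<open>Ratio bounds for positive eigenvectors\<close>

definition kernel_ratio :: "real \<Rightarrow> complex \<Rightarrow> complex \<Rightarrow> real" where
  "kernel_ratio s p q = (SUP u\<in>Ddisk. (cmod (1 + u * q) / cmod (1 + u * p)) powr (2 * s))"

lemma kernel_ratio_bdd:
  assumes "p \<in> Ddisk" "q \<in> Ddisk" "0 < s"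
  shows "bdd_above ((\<lambda>u. (cmod (1 + u * q) / cmod (1 + u * p)) powr (2 * s)) ` Ddisk)"
proof (rule bdd_aboveI2)
  fix u assume u: "u \<in> Ddisk"
  have "cmod (1 + u * q) \<le> 1 + cmod u * cmod q"
    using norm_triangle_ineq[of 1 "u * q"] by (simp add: norm_mult)
  also have "\<dots> \<le> 2"
    using mult_le_one[OF Ddisk_norm_le_1[OF u] norm_ge_zero Ddisk_norm_le_1[OF assms(2)]] by simp
  finally have "cmod (1 + u * q) / cmod (1 + u * p) \<le> 2 / (1/2)"
    using norm_one_add_mult_Ddisk_ge[OF u assms(1)] Ddisk_norm_le_1[OF assms(1)]
    by (intro frac_le) simp_all
  then show "(cmod (1 + u * q) / cmod (1 + u * p)) powr (2 * s) \<le> 4 powr (2 * s)"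
    using assms(3) by (intro powr_mono2) simp_all
qed

lemma kernel_ratio_ge:
  assumes "p \<in> Ddisk" "q \<in> Ddisk" "u \<in> Ddisk" "0 < s"
  shows "(cmod (1 + u * q) / cmod (1 + u * p)) powr (2 * s) \<le> kernel_ratio s p q"
  unfolding kernel_ratio_def by (rule cSUP_upper[OF assms(3) kernel_ratio_bdd[OF assms(1,2,4)]])

lemma one_le_kernel_ratio:
  assumes "p \<in> Ddisk" "q \<in> Ddisk" "0 < s"
  shows "1 \<le> kernel_ratio s p q"
  using kernel_ratio_ge[OF assms(1,2) zero_in_Ddisk assms(3)] by simp

lemma kernel_ratio_le:
  assumes "\<And>u. u \<in> Ddisk \<Longrightarrow> (cmod (1 + u * q) / cmod (1 + u * p)) powr (2 * s) \<le> M"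
  shows "kernel_ratio s p q \<le> M"
  unfolding kernel_ratio_def using zero_in_Ddisk assms by (intro cSUP_least) auto

lemma kernel_ratio_zero_le:
  assumes w: "w \<in> Ddisk" and s: "0 < s"
  shows "kernel_ratio s w 0 \<le> exp (2 * s * cmod w)"
proof (rule kernel_ratio_le)
  fix u assume u: "u \<in> Ddisk"
  have w1: "cmod w \<le> 1" by (rule Ddisk_norm_le_1[OF w])
  have "1 \<le> (1 + cmod w) * (1 - cmod w / 2)"
  proof -
    have "(1 + cmod w) * (1 - cmod w / 2) = 1 + cmod w * (1 - cmod w) / 2" by (simp add: field_simps)
    moreover have "0 \<le> cmod w * (1 - cmod w)" using w1 by simp
    ultimately show ?thesis by simp
  qed
  also have "\<dots> \<le> exp (cmod w) * cmod (1 + u * w)"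
    using norm_one_add_mult_Ddisk_ge[OF u w] w1 by (intro mult_mono exp_ge_add_one_self) auto
  moreover have "0 < cmod (1 + u * w)"
    using norm_one_add_mult_Ddisk_ge[OF u w] w1 by linarith
  ultimately have "1 / cmod (1 + u * w) \<le> exp (cmod w)"
    by (simp add: pos_divide_le_eq)
  then have "(1 / cmod (1 + u * w)) powr (2 * s) \<le> exp (cmod w) powr (2 * s)"
    using s by (intro powr_mono2) auto
  then show "(cmod (1 + u * 0) / cmod (1 + u * w)) powr (2 * s) \<le> exp (2 * s * cmod w)"
    by (simp add: exp_powr_real mult_ac)
qed

lemma norm_one_add_divide:
  fixes x y :: complex
  assumes "x \<noteq> 0"
  shows "cmod (1 + y / x) = cmod (x + y) / cmod x"
proof -
  have "1 + y / x = (x + y) / x" using assms by (simp add: field_simps)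
  then show ?thesis by (simp add: norm_divide)
qed

lemma kernel_ratio_branch_le:
  assumes b: "1 \<le> Re b" and p: "p \<in> Ddisk" and q: "q \<in> Ddisk" and s: "0 < s"
  shows "(cmod (q + b) / cmod (p + b)) powr (2 * s) * kernel_ratio s (1 / (p + b)) (1 / (q + b))
    \<le> kernel_ratio s p q"
proof -
  have pb: "1 \<le> cmod (p + b)" and qb: "1 \<le> cmod (q + b)" using norm_add_ge_1 p q b by auto
  define c where "c = (cmod (q + b) / cmod (p + b)) powr (2 * s)"
  have "p + b \<noteq> 0" "q + b \<noteq> 0" using pb qb by (metis norm_zero not_one_le_zero)+
  then have c: "0 < c" unfolding c_def by simp
  have "kernel_ratio s (1 / (p + b)) (1 / (q + b)) \<le> kernel_ratio s p q / c"
  proof (rule kernel_ratio_le)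
    fix u assume u: "u \<in> Ddisk"
    have ub: "1 \<le> cmod (u + b)" using norm_add_ge_1[OF u b] .
    then have "u + b \<noteq> 0" by (metis norm_zero not_one_le_zero)
    have "1 \<le> Re (u + p + b)" "1 \<le> Re (u + q + b)"
      using Ddisk_Re_nonneg[OF u] Ddisk_Re_nonneg[OF p] Ddisk_Re_nonneg[OF q] b by auto
    then have "0 < cmod (u + p + b)" "0 < cmod (u + q + b)"
      using complex_Re_le_cmod[of "u + p + b"] complex_Re_le_cmod[of "u + q + b"] by linarith+
    \<comment> \<open>both sides equal \<open>|u + q + b| / |u + p + b|\<close>\<close>
    then have "(cmod (q + b) / cmod (p + b)) * (cmod (1 + u * (1 / (q + b))) / cmod (1 + u * (1 / (p + b))))
        = cmod (1 + 1 / (u + b) * q) / cmod (1 + 1 / (u + b) * p)"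
      using pb qb ub \<open>p + b \<noteq> 0\<close> \<open>q + b \<noteq> 0\<close> \<open>u + b \<noteq> 0\<close>
      by (simp add: norm_one_add_divide add_ac)
    then have "c * (cmod (1 + u * (1 / (q + b))) / cmod (1 + u * (1 / (p + b)))) powr (2 * s)
        = (cmod (1 + 1 / (u + b) * q) / cmod (1 + 1 / (u + b) * p)) powr (2 * s)"
      unfolding c_def by (metis powr_mult norm_ge_zero divide_nonneg_nonneg)
    also have "\<dots> \<le> kernel_ratio s p q"
      using kernel_ratio_ge[OF p q inverse_add_in_Ddisk[OF u b] s] .
    finally show "(cmod (1 + u * (1 / (q + b))) / cmod (1 + u * (1 / (p + b)))) powr (2 * s)
        \<le> kernel_ratio s p q / c"
      using c by (simp add: field_simps mult.commute)
  qed
  then show ?thesis using c unfolding c_def[symmetric] by (simp add: field_simps mult.commute)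
qed

context
  fixes s :: real and B :: "complex set" and v :: "complex \<Rightarrow> real" and \<mu> :: real
  assumes s: "1 < s"
    and Re_B: "\<And>b. b \<in> B \<Longrightarrow> 1 \<le> Re b" and B_nonempty: "B \<noteq> {}"
    and summable_B: "\<And>q. q \<in> Ddisk \<Longrightarrow> (\<lambda>b. 1 / cmod (q + b) powr (2 * s)) summable_on B"
    and v_cont: "continuous_on Ddisk v" and v_pos: "\<And>z. z \<in> Ddisk \<Longrightarrow> 0 < v z"
    and v_eigen: "\<And>z. z \<in> Ddisk \<Longrightarrow> Lop s B v z = \<mu> * v z"
begin

lemma branch_summable:
  assumes q: "q \<in> Ddisk"
  shows "(\<lambda>b. v (1 / (q + b)) / cmod (q + b) powr (2 * s)) summable_on B"
proof -
  obtain M where M: "\<And>z. z \<in> Ddisk \<Longrightarrow> v z \<le> M"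
    using continuous_attains_sup[OF compact_Ddisk _ v_cont] zero_in_Ddisk by blast
  show ?thesis
  proof (rule summable_on_comparison_test[OF summable_on_cmult_right[OF summable_B[OF q], of M]])
    fix b assume b: "b \<in> B"
    have "1 / (q + b) \<in> Ddisk" by (rule inverse_add_in_Ddisk[OF q Re_B[OF b]])
    then show "v (1 / (q + b)) / cmod (q + b) powr (2 * s) \<le> M * (1 / cmod (q + b) powr (2 * s))"
      and "0 \<le> v (1 / (q + b)) / cmod (q + b) powr (2 * s)"
      using M v_pos by (auto simp: divide_right_mono less_imp_le)
  qed
qed

lemma eigenvalue_pos: "0 < \<mu>"
proof -
  obtain b0 where b0: "b0 \<in> B" using B_nonempty by blast
  let ?f = "\<lambda>b. v (1 / (0 + b)) / cmod (0 + b) powr (2 * s)"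
  have "0 < ?f b0"
    using v_pos[OF inverse_add_in_Ddisk[OF zero_in_Ddisk Re_B[OF b0]]]
      norm_add_ge_1[OF zero_in_Ddisk Re_B[OF b0]] by (auto intro!: divide_pos_pos)
  also have "?f b0 = infsum ?f {b0}" by simp
  also have "\<dots> \<le> infsum ?f B"
  proof (rule infsum_mono2)
    show "?f summable_on B" by (rule branch_summable[OF zero_in_Ddisk])
    show "\<And>b. b \<in> B - {b0} \<Longrightarrow> 0 \<le> ?f b"
      using v_pos[OF inverse_add_in_Ddisk[OF zero_in_Ddisk Re_B]] by (simp add: less_imp_le)
  qed (use b0 in auto)
  also have "\<dots> = \<mu> * v 0" using v_eigen[OF zero_in_Ddisk] unfolding Lop_def by simp
  finally show ?thesis using v_pos[OF zero_in_Ddisk] by (simp add: zero_less_mult_iff)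
qed

lemma ratio_bound_pullback:
  assumes p: "p \<in> Ddisk" and q: "q \<in> Ddisk" and K: "0 \<le> K"
    and branches: "\<And>b. b \<in> B \<Longrightarrow>
      v (1 / (p + b)) \<le> K * kernel_ratio s (1 / (p + b)) (1 / (q + b)) * v (1 / (q + b))"
  shows "v p \<le> K * kernel_ratio s p q * v q"
proof -
  have term_le: "v (1 / (p + b)) / cmod (p + b) powr (2 * s)
      \<le> K * kernel_ratio s p q * (v (1 / (q + b)) / cmod (q + b) powr (2 * s))"
    if b: "b \<in> B" for b
  proof -
    define c where "c = (cmod (q + b) / cmod (p + b)) powr (2 * s)"
    have pb: "0 < cmod (p + b)" and qb: "0 < cmod (q + b)"
      using norm_add_ge_1[OF p Re_B[OF b]] norm_add_ge_1[OF q Re_B[OF b]] by linarith+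
    then have weight: "1 / cmod (p + b) powr (2 * s) = c * (1 / cmod (q + b) powr (2 * s))"
      unfolding c_def by (simp add: powr_divide)
    have c: "0 \<le> c" unfolding c_def by simp
    have "v (1 / (p + b)) / cmod (p + b) powr (2 * s) = v (1 / (p + b)) * (1 / cmod (p + b) powr (2 * s))"
      by simp
    also have "\<dots> = v (1 / (p + b)) * c * (1 / cmod (q + b) powr (2 * s))"
      unfolding weight by (simp only: mult.assoc)
    also have "\<dots> \<le> K * kernel_ratio s (1 / (p + b)) (1 / (q + b)) * v (1 / (q + b)) * c
        * (1 / cmod (q + b) powr (2 * s))"
      using branches[OF b] c by (intro mult_right_mono) auto
    also have "\<dots> = K * (c * kernel_ratio s (1 / (p + b)) (1 / (q + b)))
        * (v (1 / (q + b)) / cmod (q + b) powr (2 * s))"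
      by (simp add: mult_ac)
    also have "\<dots> \<le> K * kernel_ratio s p q * (v (1 / (q + b)) / cmod (q + b) powr (2 * s))"
      unfolding c_def using s K v_pos[OF inverse_add_in_Ddisk[OF q Re_B[OF b]]]
      by (intro mult_right_mono mult_left_mono kernel_ratio_branch_le[OF Re_B[OF b] p q]) auto
    finally show ?thesis .
  qed
  have "\<mu> * v p = Lop s B v p" using v_eigen[OF p] by simp
  also have "\<dots> \<le> (\<Sum>\<^sub>\<infinity>b\<in>B. K * kernel_ratio s p q * (v (1 / (q + b)) / cmod (q + b) powr (2 * s)))"
    unfolding Lop_def using term_le
    by (intro infsum_mono branch_summable[OF p] summable_on_cmult_right branch_summable[OF q])
  also have "\<dots> = K * kernel_ratio s p q * Lop s B v q" unfolding Lop_def by (rule infsum_cmult_right')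
  also have "\<dots> = \<mu> * (K * kernel_ratio s p q * v q)" using v_eigen[OF q] by simp
  finally show ?thesis using eigenvalue_pos by simp
qed

lemma ratio_bound_spread:
  assumes K: "0 \<le> K"
    and near: "\<And>x y. x \<in> Ddisk \<Longrightarrow> y \<in> Ddisk \<Longrightarrow> cmod (x - y) < d \<Longrightarrow>
      v x \<le> K * kernel_ratio s x y * v y"
  shows "x \<in> Ddisk \<Longrightarrow> y \<in> Ddisk \<Longrightarrow> cmod (x - y) < d * 4 ^ k \<Longrightarrow>
      v x \<le> K * kernel_ratio s x y * v y"
proof (induction k arbitrary: x y)
  case 0
  then show ?case using near by simp
next
  case (Suc k)
  have "v (1 / (x + c)) \<le> K * kernel_ratio s (1 / (x + c)) (1 / (y + c)) * v (1 / (y + c))"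
    if c: "c \<in> B" for c
  proof (rule ratio_bound_pullback[OF _ _ K])
    show x': "1 / (x + c) \<in> Ddisk" and y': "1 / (y + c) \<in> Ddisk"
      using inverse_add_in_Ddisk Suc.prems Re_B[OF c] by auto
    fix b assume b: "b \<in> B"
    have "cmod (1 / (1 / (x + c) + b) - 1 / (1 / (y + c) + b)) \<le> cmod (x - y) / 4"
      by (rule double_branch_contraction[OF Re_B[OF b] Re_B[OF c] Suc.prems(1,2)])
    also have "\<dots> < d * 4 ^ k" using Suc.prems(3) by simp
    finally show "v (1 / (1 / (x + c) + b))
        \<le> K * kernel_ratio s (1 / (1 / (x + c) + b)) (1 / (1 / (y + c) + b)) * v (1 / (1 / (y + c) + b))"
      using Suc.IH inverse_add_in_Ddisk[OF x' Re_B[OF b]] inverse_add_in_Ddisk[OF y' Re_B[OF b]]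
      by blast
  qed
  then show ?case using ratio_bound_pullback[OF Suc.prems(1,2) K] by blast
qed

lemma ratio_bound_near:
  assumes e: "0 < e"
  obtains d where "0 < d"
    "\<And>x y. x \<in> Ddisk \<Longrightarrow> y \<in> Ddisk \<Longrightarrow> cmod (x - y) < d \<Longrightarrow> v x \<le> (1 + e) * v y"
proof -
  obtain m where m: "m \<in> Ddisk" "\<And>y. y \<in> Ddisk \<Longrightarrow> v m \<le> v y"
    using continuous_attains_inf[OF compact_Ddisk _ v_cont] zero_in_Ddisk by blast
  have "uniformly_continuous_on Ddisk v"
    by (rule compact_uniformly_continuous[OF v_cont compact_Ddisk])
  then obtain d where d: "0 < d"
    "\<And>x y. x \<in> Ddisk \<Longrightarrow> y \<in> Ddisk \<Longrightarrow> dist y x < d \<Longrightarrow> dist (v y) (v x) < e * v m"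
    unfolding uniformly_continuous_on_def using e v_pos[OF m(1)] by (metis mult_pos_pos)
  have "v x \<le> (1 + e) * v y" if "x \<in> Ddisk" "y \<in> Ddisk" "cmod (x - y) < d" for x y
  proof -
    have "v x < v y + e * v m" using d(2)[of y x] that by (simp add: dist_norm dist_real_def)
    also have "\<dots> \<le> v y + e * v y" using m(2)[OF that(2)] e by simp
    finally show ?thesis by (simp add: algebra_simps)
  qed
  with d(1) show thesis by (rule that)
qed

lemma ratio_bound:
  assumes p: "p \<in> Ddisk" and q: "q \<in> Ddisk"
  shows "v p \<le> kernel_ratio s p q * v q"
proof (rule field_le_mult_one_interval)
  fix z :: real assume z: "0 < z" "z < 1"
  define e where "e = 1 / z - 1"
  have e: "0 < e" unfolding e_def using z by simp
  obtain d where d: "0 < d"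
    "\<And>x y. x \<in> Ddisk \<Longrightarrow> y \<in> Ddisk \<Longrightarrow> cmod (x - y) < d \<Longrightarrow> v x \<le> (1 + e) * v y"
    using ratio_bound_near[OF e] by blast
  have near: "v x \<le> (1 + e) * kernel_ratio s x y * v y"
    if "x \<in> Ddisk" "y \<in> Ddisk" "cmod (x - y) < d" for x y
  proof -
    have "1 * ((1 + e) * v y) \<le> kernel_ratio s x y * ((1 + e) * v y)"
      using one_le_kernel_ratio[OF that(1,2)] v_pos[OF that(2)] e s by (intro mult_right_mono) auto
    then show ?thesis using d(2)[OF that] by (simp add: mult_ac)
  qed
  obtain k :: nat where "1 / d < 4 ^ k" using real_arch_pow[of 4 "1 / d"] by auto
  then have "cmod (p - q) < d * 4 ^ k"
    using Ddisk_dist_le_1[OF p q] d(1) by (simp add: field_simps)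
  then have "v p \<le> (1 + e) * kernel_ratio s p q * v q"
    using ratio_bound_spread[OF _ near p q] e by simp
  then show "z * v p \<le> kernel_ratio s p q * v q"
    using z unfolding e_def by (simp add: field_simps)
qed

lemma eigvec_le_exp_norm:
  assumes w: "w \<in> Ddisk"
  shows "v w \<le> exp (2 * s * cmod w) * v 0"
proof -
  have "v w \<le> kernel_ratio s w 0 * v 0" by (rule ratio_bound[OF w zero_in_Ddisk])
  also have "\<dots> \<le> exp (2 * s * cmod w) * v 0"
    using kernel_ratio_zero_le[OF w] s v_pos[OF zero_in_Ddisk] by (intro mult_right_mono) auto
  finally show ?thesis .
qed

lemma eigvec_branch_le:
  assumes z: "z \<in> Ddisk" and b: "b \<in> B" and R: "1 < R" "R < cmod b"
  shows "v (1 / (z + b)) \<le> exp (2 * s / sqrt (R\<^sup>2 - R)) * v 0"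
proof -
  have Re_b: "0 \<le> Re b" using Re_B[OF b] by simp
  have "0 < sqrt (R\<^sup>2 - R)" using R by (simp add: power2_eq_square)
  then have "cmod (1 / (z + b)) \<le> 1 / sqrt (R\<^sup>2 - R)"
    using norm_add_ge_sqrt[OF z Re_b R] by (simp add: norm_divide frac_le)
  then have "2 * s * cmod (1 / (z + b)) \<le> 2 * s * (1 / sqrt (R\<^sup>2 - R))"
    using s by (intro mult_left_mono) auto
  then have "exp (2 * s * cmod (1 / (z + b))) * v 0 \<le> exp (2 * s / sqrt (R\<^sup>2 - R)) * v 0"
    using v_pos[OF zero_in_Ddisk] by (intro mult_right_mono) auto
  then show ?thesis
    using eigvec_le_exp_norm[OF inverse_add_in_Ddisk[OF z Re_B[OF b]]] by linarith
qed

lemma eigvec_tail_sum_le: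
  assumes R: "1 < R" and z: "z \<in> Ddisk"
    and tail: "(\<lambda>b. cmod b powr (- (2 * s))) summable_on {b\<in>B. R < cmod b}"
    and tail_le: "(\<Sum>\<^sub>\<infinity>b\<in>{b\<in>B. R < cmod b}. cmod b powr (- (2 * s))) \<le> C"
  shows "(\<Sum>\<^sub>\<infinity>b\<in>{b\<in>B. R < cmod b}. v (1 / (z + b)) / cmod (z + b) powr (2 * s))
    \<le> exp (2 * s / sqrt (R\<^sup>2 - R)) * (R / (R - 1)) powr s * C * v 0"
proof -
  define K where "K = exp (2 * s / sqrt (R\<^sup>2 - R)) * (R / (R - 1)) powr s * v 0"
  have nonneg: "0 \<le> v (1 / (z + b)) / cmod (z + b) powr (2 * s)" if "b \<in> B" for b
    using v_pos[OF inverse_add_in_Ddisk[OF z Re_B[OF that]]] by simp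
  have term_le: "v (1 / (z + b)) / cmod (z + b) powr (2 * s) \<le> K * cmod b powr (- (2 * s))"
    if "b \<in> {b\<in>B. R < cmod b}" for b
  proof -
    have b: "b \<in> B" "R < cmod b" "0 \<le> Re b" using that Re_B[of b] by auto
    have "v (1 / (z + b)) \<le> exp (2 * s / sqrt (R\<^sup>2 - R)) * v 0"
      by (rule eigvec_branch_le[OF z b(1) R b(2)])
    moreover have "1 / cmod (z + b) powr (2 * s) \<le> (R / (R - 1)) powr s * cmod b powr (- (2 * s))"
      using s by (intro inverse_norm_add_powr_le[OF z b(3) R b(2)]) simp
    moreover have "0 \<le> exp (2 * s / sqrt (R\<^sup>2 - R)) * v 0" using v_pos[OF zero_in_Ddisk] by simp
    ultimately have "v (1 / (z + b)) * (1 / cmod (z + b) powr (2 * s))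
        \<le> (exp (2 * s / sqrt (R\<^sup>2 - R)) * v 0) * ((R / (R - 1)) powr s * cmod b powr (- (2 * s)))"
      by (intro mult_mono) simp_all
    then show ?thesis unfolding K_def by (simp add: mult_ac)
  qed
  have summable: "(\<lambda>b. v (1 / (z + b)) / cmod (z + b) powr (2 * s)) summable_on {b\<in>B. R < cmod b}"
    using nonneg by (intro summable_on_comparison_test[OF summable_on_cmult_right[OF tail, of K] term_le]) auto
  have "(\<Sum>\<^sub>\<infinity>b\<in>{b\<in>B. R < cmod b}. v (1 / (z + b)) / cmod (z + b) powr (2 * s))
      \<le> (\<Sum>\<^sub>\<infinity>b\<in>{b\<in>B. R < cmod b}. K * cmod b powr (- (2 * s)))"
    by (rule infsum_mono[OF summable summable_on_cmult_right[OF tail] term_le])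
  also have "\<dots> = K * (\<Sum>\<^sub>\<infinity>b\<in>{b\<in>B. R < cmod b}. cmod b powr (- (2 * s)))"
    by (rule infsum_cmult_right')
  also have "\<dots> \<le> K * C"
    using tail_le v_pos[OF zero_in_Ddisk] unfolding K_def by (intro mult_left_mono) auto
  finally show ?thesis unfolding K_def by (simp add: mult_ac)
qed

end

lemma pos_eigvec_tail_sum_le:
  assumes "1 < s" "1 < R" "\<And>b. b \<in> B \<Longrightarrow> 1 \<le> Re b" "B \<noteq> {}"
    and "\<And>q. q \<in> Ddisk \<Longrightarrow> (\<lambda>b. 1 / cmod (q + b) powr (2 * s)) summable_on B"
    and "(\<lambda>b. cmod b powr (- (2 * s))) summable_on {b\<in>B. R < cmod b}"
    and "(\<Sum>\<^sub>\<infinity>b\<in>{b\<in>B. R < cmod b}. cmod b powr (- (2 * s))) \<le> C"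
    and "pos_eigvec s B v" and "z \<in> Ddisk"
  shows "(\<Sum>\<^sub>\<infinity>b\<in>{b\<in>B. R < cmod b}. v (1 / (z + b)) / cmod (z + b) powr (2 * s))
    \<le> exp (2 * s / sqrt (R\<^sup>2 - R)) * (R / (R - 1)) powr s * C * v 0"
  by (rule eigvec_tail_sum_le[where \<mu> = "spec_rad s B"]) (use assms in \<open>auto simp: pos_eigvec_def\<close>)

lemma summable_on_inverse_norm_add_powr:
  assumes s: "1 < s" and R: "1 < R" and Re_B: "\<And>b. b \<in> B \<Longrightarrow> 1 \<le> Re b" and q: "q \<in> Ddisk"
    and head: "finite {b\<in>B. cmod b \<le> R}"
    and tail: "(\<lambda>b. cmod b powr (- (2 * s))) summable_on {b\<in>B. R < cmod b}"
  shows "(\<lambda>b. 1 / cmod (q + b) powr (2 * s)) summable_on B"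
proof -
  have "(\<lambda>b. 1 / cmod (q + b) powr (2 * s)) summable_on {b\<in>B. R < cmod b}"
  proof (rule summable_on_comparison_test[OF summable_on_cmult_right[OF tail, of "(R / (R - 1)) powr s"]])
    fix b assume b: "b \<in> {b\<in>B. R < cmod b}"
    then have "0 \<le> Re b" using Re_B[of b] by simp
    then show "1 / cmod (q + b) powr (2 * s) \<le> (R / (R - 1)) powr s * cmod b powr (- (2 * s))"
      using b s by (intro inverse_norm_add_powr_le[OF q _ R]) auto
  qed simp
  then have "(\<lambda>b. 1 / cmod (q + b) powr (2 * s)) summable_on ({b\<in>B. cmod b \<le> R} \<union> {b\<in>B. R < cmod b})"
    by (rule summable_on_union[OF summable_on_finite[OF head]])
  moreover have "{b\<in>B. cmod b \<le> R} \<union> {b\<in>B. R < cmod b} = B" by auto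
  ultimately show ?thesis by simp
qed

section \<open>The digit sets I1 and I2\<close>

lemma one_less_of_sqrt2_less: "sqrt 2 < R \<Longrightarrow> 1 < R"
  using real_sqrt_ge_one[of 2] by linarith

lemma mem_I1_iff: "b \<in> I1 \<longleftrightarrow> Re b \<in> \<int> \<and> Im b \<in> \<int> \<and> 1 \<le> Re b"
proof
  assume "Re b \<in> \<int> \<and> Im b \<in> \<int> \<and> 1 \<le> Re b"
  then obtain m n where mn: "Re b = of_int m" "Im b = of_int n" "1 \<le> m"
    by (auto elim!: Ints_cases)
  then have "b = of_nat (nat m) + of_int n * \<i> \<and> 1 \<le> nat m" by (simp add: complex_eq_iff)
  then show "b \<in> I1" unfolding I1_def by blast
qed (auto simp: I1_def)

lemma mem_I2_iff: "b \<in> I2 \<longleftrightarrow> Re b \<in> \<int> \<and> Im b \<in> \<int> \<and> 1 \<le> Re b \<and> 0 \<le> Im b"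
proof
  assume "Re b \<in> \<int> \<and> Im b \<in> \<int> \<and> 1 \<le> Re b \<and> 0 \<le> Im b"
  then obtain m n where mn: "Re b = of_int m" "Im b = of_int n" "1 \<le> m" "0 \<le> n"
    by (auto elim!: Ints_cases)
  then have "b = of_nat (nat m) + of_nat (nat n) * \<i> \<and> 1 \<le> nat m" by (simp add: complex_eq_iff)
  then show "b \<in> I2" unfolding I2_def by blast
qed (auto simp: I2_def)

lemma finite_I1_norm_le: "finite {b\<in>I1. cmod b \<le> r}"
proof -
  let ?N = "\<lceil>r\<rceil>"
  have "{b\<in>I1. cmod b \<le> r} \<subseteq> (\<lambda>(m, n). Complex (of_int m) (of_int n)) ` ({-?N..?N} \<times> {-?N..?N})"
  proof
    fix b assume b: "b \<in> {b\<in>I1. cmod b \<le> r}"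
    then obtain m n where mn: "Re b = of_int m" "Im b = of_int n"
      unfolding mem_I1_iff by (auto elim!: Ints_cases)
    have "\<bar>of_int m\<bar> \<le> r" "\<bar>of_int n\<bar> \<le> r"
      using b abs_Re_le_cmod[of b] abs_Im_le_cmod[of b] mn by auto
    then have "m \<in> {-?N..?N}" "n \<in> {-?N..?N}" by (auto simp: abs_le_iff) linarith+
    moreover have "b = Complex (of_int m) (of_int n)" using mn by (simp add: complex_eq_iff)
    ultimately show "b \<in> (\<lambda>(m, n). Complex (of_int m) (of_int n)) ` ({-?N..?N} \<times> {-?N..?N})"
      by force
  qed
  then show ?thesis by (rule finite_subset) auto
qed

lemma I2_subset_I1: "I2 \<subseteq> I1"
  by (auto simp: mem_I1_iff mem_I2_iff)

lemma I1_tail_eq: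
  "{b\<in>I1. R < cmod b} = {b\<in>I2. R < cmod b} \<union> cnj ` {b\<in>I2. Im b \<noteq> 0 \<and> R < cmod b}"
proof (intro equalityI subsetI)
  fix b assume b: "b \<in> {b\<in>I1. R < cmod b}"
  show "b \<in> {b\<in>I2. R < cmod b} \<union> cnj ` {b\<in>I2. Im b \<noteq> 0 \<and> R < cmod b}"
  proof (cases "0 \<le> Im b")
    case True
    then show ?thesis using b by (simp add: mem_I1_iff mem_I2_iff)
  next
    case False
    then have "cnj b \<in> {b\<in>I2. Im b \<noteq> 0 \<and> R < cmod b}" using b by (simp add: mem_I1_iff mem_I2_iff)
    then have "b \<in> cnj ` {b\<in>I2. Im b \<noteq> 0 \<and> R < cmod b}" by (rule image_eqI[rotated]) simp
    then show ?thesis by blast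
  qed
next
  fix b assume "b \<in> {b\<in>I2. R < cmod b} \<union> cnj ` {b\<in>I2. Im b \<noteq> 0 \<and> R < cmod b}"
  then consider "b \<in> {b\<in>I2. R < cmod b}" | c where "c \<in> {b\<in>I2. Im b \<noteq> 0 \<and> R < cmod b}" "b = cnj c"
    by blast
  then show "b \<in> {b\<in>I1. R < cmod b}"
    by cases (simp_all add: mem_I1_iff mem_I2_iff)
qed

lemma I2_axis_card_le:
  assumes b: "b \<in> {b\<in>I2. Im b = 0 \<and> R < cmod b}"
  shows "real (card {c\<in>{b\<in>I2. Im b = 0 \<and> R < cmod b}. cmod c \<le> cmod b}) \<le> cmod b - R + 1"
proof -
  define A where "A = {c\<in>{b\<in>I2. Im b = 0 \<and> R < cmod b}. cmod c \<le> cmod b}"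
  have axis: "c = of_int \<lfloor>Re c\<rfloor> \<and> Re c = of_int \<lfloor>Re c\<rfloor> \<and> cmod c = Re c" if "c \<in> I2" "Im c = 0" for c
    using that by (auto simp: mem_I2_iff complex_eq_iff cmod_eq_Re)
  have "inj_on (\<lambda>c. \<lfloor>Re c\<rfloor>) A"
    by (rule inj_on_inverseI[where g = of_int]) (use axis in \<open>auto simp: A_def\<close>)
  moreover have "(\<lambda>c. \<lfloor>Re c\<rfloor>) ` A \<subseteq> {\<lfloor>R\<rfloor> + 1..\<lfloor>Re b\<rfloor>}"
  proof clarify
    fix c assume "c \<in> A"
    then have "R < of_int \<lfloor>Re c\<rfloor>" "Re c \<le> Re b"
      using axis[of c] axis[of b] b unfolding A_def by auto
    then have "\<lfloor>R\<rfloor> < \<lfloor>Re c\<rfloor>" "\<lfloor>Re c\<rfloor> \<le> \<lfloor>Re b\<rfloor>" by (simp_all add: floor_less_iff floor_mono)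
    then show "\<lfloor>Re c\<rfloor> \<in> {\<lfloor>R\<rfloor> + 1..\<lfloor>Re b\<rfloor>}" by simp
  qed
  ultimately have "card A \<le> card {\<lfloor>R\<rfloor> + 1..\<lfloor>Re b\<rfloor>}"
    by (intro card_inj_on_le) auto
  also have "\<dots> = nat (\<lfloor>Re b\<rfloor> - \<lfloor>R\<rfloor>)" by simp
  finally have "card A \<le> nat (\<lfloor>Re b\<rfloor> - \<lfloor>R\<rfloor>)" .
  moreover have "\<lfloor>R\<rfloor> \<le> \<lfloor>Re b\<rfloor>" using axis[of b] b by (auto intro: floor_mono)
  ultimately have "int (card A) \<le> \<lfloor>Re b\<rfloor> - \<lfloor>R\<rfloor>" by (simp add: le_nat_iff)
  then have "real (card A) \<le> of_int \<lfloor>Re b\<rfloor> - of_int \<lfloor>R\<rfloor>"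
    using of_int_le_iff[where 'a = real] by fastforce
  moreover have "of_int \<lfloor>Re b\<rfloor> = cmod b" using axis[of b] b by auto
  moreover have "R < of_int \<lfloor>R\<rfloor> + 1" by (rule real_of_int_floor_add_one_gt)
  ultimately have "real (card A) \<le> cmod b - R + 1" by linarith
  then show ?thesis by (simp only: A_def)
qed

lemma I2_axis_tail_sum:
  assumes "1 < R" "1 < s"
  shows "(\<lambda>b. cmod b powr (- (2 * s))) summable_on {b\<in>I2. Im b = 0 \<and> R < cmod b}"
    "(\<Sum>\<^sub>\<infinity>b\<in>{b\<in>I2. Im b = 0 \<and> R < cmod b}. cmod b powr (- (2 * s)))
      \<le> 1 / (2 * s - 1) * (1 / (R - 1)) powr (2 * s - 1)"
proof -
  let ?A = "{b\<in>I2. Im b = 0 \<and> R < cmod b}"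
  have "finite {c\<in>?A. cmod c \<le> cmod b}" for b
    by (rule finite_subset[OF _ finite_I1_norm_le[of "cmod b"]]) (use I2_subset_I1 in auto)
  moreover have "R - 1 + 1 * real (card {c\<in>?A. cmod c \<le> cmod b}) \<le> cmod b" if "b \<in> ?A" for b
    using I2_axis_card_le[OF that] by simp
  ultimately have "(\<lambda>b. cmod b powr (- (2 * s))) summable_on ?A"
    "(\<Sum>\<^sub>\<infinity>b\<in>?A. cmod b powr (- (2 * s))) \<le> (R - 1) powr (1 - 2 * s) / (1 * (2 * s - 1))"
    using powr_sum_le_by_counting[of "R - 1" 1 "2 * s" ?A cmod] assms by auto
  moreover have "(R - 1) powr (1 - 2 * s) = (1 / (R - 1)) powr (2 * s - 1)"
    using assms by (simp add: inverse_powr)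
  ultimately show "(\<lambda>b. cmod b powr (- (2 * s))) summable_on ?A"
    "(\<Sum>\<^sub>\<infinity>b\<in>?A. cmod b powr (- (2 * s))) \<le> 1 / (2 * s - 1) * (1 / (R - 1)) powr (2 * s - 1)"
    by simp_all
qed

lemma I2_quadrant_tail_sum:
  assumes R: "sqrt 2 < R" and s: "1 < s"
  shows "(\<lambda>b. cmod b powr (- (2 * s))) summable_on {b\<in>I2. Im b \<noteq> 0 \<and> R < cmod b}"
    "(\<Sum>\<^sub>\<infinity>b\<in>{b\<in>I2. Im b \<noteq> 0 \<and> R < cmod b}. cmod b powr (- (2 * s)))
      \<le> pi / 4 * (1 / (s - 1)) * (1 / (R - sqrt 2)) powr (2 * s - 2)"
proof -
  let ?A = "{b\<in>I2. Im b \<noteq> 0 \<and> R < cmod b}"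
  define \<rho> where "\<rho> = R - sqrt 2"
  have \<rho>: "0 < \<rho>" unfolding \<rho>_def using R by simp
  have rank_set: "{c\<in>?A. (cmod c)^2 \<le> (cmod b)^2} = {c\<in>?A. cmod c \<le> cmod b}" for b
    by (auto simp: power_mono_iff)
  have "finite {c\<in>?A. (cmod c)^2 \<le> (cmod b)^2}" for b
    unfolding rank_set
    by (rule finite_subset[OF _ finite_I1_norm_le[of "cmod b"]]) (use I2_subset_I1 in auto)
  moreover have "\<rho>^2 + 4 / pi * real (card {c\<in>?A. (cmod c)^2 \<le> (cmod b)^2}) \<le> (cmod b)^2"
    if b: "b \<in> ?A" for b
  proof -
    have "4 * real (card {c\<in>?A. cmod c \<le> cmod b}) \<le> pi * ((cmod b)^2 - \<rho>^2)"
      unfolding \<rho>_def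
    proof (rule card_quadrant_lattice_annulus[OF _ R])
      show "finite {c\<in>?A. cmod c \<le> cmod b}" using calculation unfolding rank_set .
      show "R \<le> cmod b" using b by simp
      fix c assume "c \<in> {c\<in>?A. cmod c \<le> cmod b}"
      then show "Re c \<in> \<int> \<and> Im c \<in> \<int> \<and> 1 \<le> Re c \<and> 1 \<le> Im c \<and> R < cmod c \<and> cmod c \<le> cmod b"
        using Ints_nonzero_abs_ge1[of "Im c"] by (auto simp: mem_I2_iff)
    qed
    then show ?thesis unfolding rank_set by (simp add: field_simps)
  qed
  ultimately have "(\<lambda>b. ((cmod b)^2) powr (- s)) summable_on ?A"
    "(\<Sum>\<^sub>\<infinity>b\<in>?A. ((cmod b)^2) powr (- s)) \<le> (\<rho>^2) powr (1 - s) / (4 / pi * (s - 1))"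
    using powr_sum_le_by_counting[of "\<rho>^2" "4 / pi" s ?A "\<lambda>b. (cmod b)^2"] \<rho> s by auto
  moreover have "(\<lambda>b. ((cmod b)^2) powr (- s)) = (\<lambda>b. cmod b powr (- (2 * s)))"
    by (simp add: power2_powr)
  moreover have "(\<rho>^2) powr (1 - s) = (1 / \<rho>) powr (2 * s - 2)"
    using \<rho> by (simp add: power2_powr inverse_powr algebra_simps)
  ultimately show "(\<lambda>b. cmod b powr (- (2 * s))) summable_on ?A"
    "(\<Sum>\<^sub>\<infinity>b\<in>?A. cmod b powr (- (2 * s))) \<le> pi / 4 * (1 / (s - 1)) * (1 / (R - sqrt 2)) powr (2 * s - 2)"
    unfolding \<rho>_def by (simp_all add: field_simps)
qed

lemma I2_tail_sum:
  assumes R: "sqrt 2 < R" and s: "1 < s"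
  shows "(\<lambda>b. cmod b powr (- (2 * s))) summable_on {b\<in>I2. R < cmod b}"
    "(\<Sum>\<^sub>\<infinity>b\<in>{b\<in>I2. R < cmod b}. cmod b powr (- (2 * s)))
      \<le> 1 / (2 * s - 1) * (1 / (R - 1)) powr (2 * s - 1)
        + pi / 4 * (1 / (s - 1)) * (1 / (R - sqrt 2)) powr (2 * s - 2)"
proof -
  have R1: "1 < R" using one_less_of_sqrt2_less[OF R] .
  have split: "{b\<in>I2. R < cmod b} = {b\<in>I2. Im b = 0 \<and> R < cmod b} \<union> {b\<in>I2. Im b \<noteq> 0 \<and> R < cmod b}"
    by auto
  have disjoint: "{b\<in>I2. Im b = 0 \<and> R < cmod b} \<inter> {b\<in>I2. Im b \<noteq> 0 \<and> R < cmod b} = {}"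
    by auto
  show "(\<lambda>b. cmod b powr (- (2 * s))) summable_on {b\<in>I2. R < cmod b}"
    unfolding split
    by (rule summable_on_Un_disjoint[OF I2_axis_tail_sum(1)[OF R1 s] I2_quadrant_tail_sum(1)[OF R s] disjoint])
  show "(\<Sum>\<^sub>\<infinity>b\<in>{b\<in>I2. R < cmod b}. cmod b powr (- (2 * s)))
      \<le> 1 / (2 * s - 1) * (1 / (R - 1)) powr (2 * s - 1)
        + pi / 4 * (1 / (s - 1)) * (1 / (R - sqrt 2)) powr (2 * s - 2)"
    unfolding split
    using infsum_Un_disjoint[OF I2_axis_tail_sum(1)[OF R1 s] I2_quadrant_tail_sum(1)[OF R s] disjoint]
      I2_axis_tail_sum(2)[OF R1 s] I2_quadrant_tail_sum(2)[OF R s]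
    by linarith
qed

lemma I1_tail_sum:
  assumes R: "sqrt 2 < R" and s: "1 < s"
  shows "(\<lambda>b. cmod b powr (- (2 * s))) summable_on {b\<in>I1. R < cmod b}"
    "(\<Sum>\<^sub>\<infinity>b\<in>{b\<in>I1. R < cmod b}. cmod b powr (- (2 * s)))
      \<le> 1 / (2 * s - 1) * (1 / (R - 1)) powr (2 * s - 1)
        + pi / 2 * (1 / (s - 1)) * (1 / (R - sqrt 2)) powr (2 * s - 2)"
proof -
  let ?h = "\<lambda>b. cmod b powr (- (2 * s))" and ?Q = "{b\<in>I2. Im b \<noteq> 0 \<and> R < cmod b}"
  have "inj_on cnj ?Q" by (rule inj_onI) simp
  moreover have "?h \<circ> cnj = ?h" by (simp add: o_def)
  ultimately have mirror: "?h summable_on cnj ` ?Q" "infsum ?h (cnj ` ?Q) = infsum ?h ?Q"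
    using I2_quadrant_tail_sum(1)[OF R s] by (simp_all add: summable_on_reindex infsum_reindex)
  have disjoint: "{b\<in>I2. R < cmod b} \<inter> cnj ` ?Q = {}"
    by (auto simp: mem_I2_iff)
  show "?h summable_on {b\<in>I1. R < cmod b}"
    unfolding I1_tail_eq by (rule summable_on_Un_disjoint[OF I2_tail_sum(1)[OF R s] mirror(1) disjoint])
  show "infsum ?h {b\<in>I1. R < cmod b}
      \<le> 1 / (2 * s - 1) * (1 / (R - 1)) powr (2 * s - 1)
        + pi / 2 * (1 / (s - 1)) * (1 / (R - sqrt 2)) powr (2 * s - 2)"
    unfolding I1_tail_eq
    using infsum_Un_disjoint[OF I2_tail_sum(1)[OF R s] mirror(1) disjoint] mirror(2)
      I2_tail_sum(2)[OF R s] I2_quadrant_tail_sum(2)[OF R s]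
    by linarith
qed

theorem lemma4p3:
  fixes s R :: real and v1 v2 :: "complex \<Rightarrow> real"
  assumes "s > 1" and "R > sqrt 2"
  shows "(pos_eigvec s I1 v1 \<longrightarrow> (\<forall>z\<in>Ddisk.
            (\<Sum>\<^sub>\<infinity> b\<in>{b\<in>I1. cmod b > R}. v1 (1 / (z + b)) / cmod (z + b) powr (2 * s))
          \<le> exp (2 * s / sqrt (R\<^sup>2 - R)) * (R / (R - 1)) powr s *
             (1 / (2 * s - 1) * (1 / (R - 1)) powr (2 * s - 1)
              + pi / 2 * (1 / (s - 1)) * (1 / (R - sqrt 2)) powr (2 * s - 2)) * v1 0))
       \<and> (pos_eigvec s I2 v2 \<longrightarrow> (\<forall>z\<in>Ddisk.
            (\<Sum>\<^sub>\<infinity> b\<in>{b\<in>I2. cmod b > R}. v2 (1 / (z + b)) / cmod (z + b) powr (2 * s))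
          \<le> exp (2 * s / sqrt (R\<^sup>2 - R)) * (R / (R - 1)) powr s *
             (1 / (2 * s - 1) * (1 / (R - 1)) powr (2 * s - 1)
              + pi / 4 * (1 / (s - 1)) * (1 / (R - sqrt 2)) powr (2 * s - 2)) * v2 0))"
proof -
  have s: "1 < s" and R: "sqrt 2 < R" using assms by auto
  have R1: "1 < R" using one_less_of_sqrt2_less[OF R] .
  have Re_I1: "\<And>b. b \<in> I1 \<Longrightarrow> 1 \<le> Re b" and Re_I2: "\<And>b. b \<in> I2 \<Longrightarrow> 1 \<le> Re b"
    by (simp_all add: mem_I1_iff mem_I2_iff)
  have nonempty: "I1 \<noteq> {}" "I2 \<noteq> {}" using mem_I1_iff[of 1] mem_I2_iff[of 1] by auto
  have "finite {b\<in>I2. cmod b \<le> R}"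
    by (rule finite_subset[OF _ finite_I1_norm_le]) (use I2_subset_I1 in auto)
  then have summable:
    "\<And>q. q \<in> Ddisk \<Longrightarrow> (\<lambda>b. 1 / cmod (q + b) powr (2 * s)) summable_on I1"
    "\<And>q. q \<in> Ddisk \<Longrightarrow> (\<lambda>b. 1 / cmod (q + b) powr (2 * s)) summable_on I2"
    using summable_on_inverse_norm_add_powr[OF s R1] finite_I1_norm_le Re_I1 Re_I2
      I1_tail_sum(1)[OF R s] I2_tail_sum(1)[OF R s] by auto
  show ?thesis
    by (intro conjI impI ballI pos_eigvec_tail_sum_le[OF s R1 Re_I1 nonempty(1) summable(1) I1_tail_sum[OF R s]]
        pos_eigvec_tail_sum_le[OF s R1 Re_I2 nonempty(2) summable(2) I2_tail_sum[OF R s]])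
qed

end
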